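(* Let $R$ be a ring with identity and involution $*$, and let $a,b\in R$ with $aR=a^2R$. Then the following are equivalent: (1) $a$ is core invertible with core inverse $a^{\oplus}=b$; (2) $bab=b$, $(ab)^*=ab$ and $ba^2=a$.
   Context: An involution on $R$ satisfies $(a^* )^*=a$, $(ab)^*=b^*a^*$, $(a+b)^*=a^*+b^*$. An element $x\in R$ is a core inverse of $a$ if $axa=a$, $xR=aR$ and $Rx=Ra^*$; it is unique when it exists and is denoted $a^{\oplus}$. $aR=\{ar: r\in R\}$. *)

theory Defs
  imports Main
begin

definition involution :: "('a::ring_1 \<Rightarrow> 'a) \<Rightarrow> bool" where
  "involution s \<longleftrightarrow> (\<forall>a. s (s a) = a) \<and> (\<forall>a b. s (a * b) = s b * s a)
      \<and> (\<forall>a b. s (a + b) = s a + s b)"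

definition right_ideal :: "'a::ring_1 \<Rightarrow> 'a set" where
  "right_ideal a = {a * r | r. True}"

definition left_ideal :: "'a::ring_1 \<Rightarrow> 'a set" where
  "left_ideal a = {r * a | r. True}"

definition is_core_inverse :: "('a::ring_1 \<Rightarrow> 'a) \<Rightarrow> 'a \<Rightarrow> 'a \<Rightarrow> bool" where
  "is_core_inverse s a x \<longleftrightarrow> a * x * a = a \<and> right_ideal x = right_ideal a
      \<and> left_ideal x = left_ideal (s a)"

end

theory Submission
  imports Defs
begin

text \<open>Suppose \<open>b\<close> is a core inverse of \<open>a\<close>. Writing \<open>b = u a\<^sup>*\<close>, the identity
  \<open>a\<^sup>* = a\<^sup>* b\<^sup>* a\<^sup>*\<close> (the involution applied to \<open>aba = a\<close>) yields \<open>b = b(ab)\<^sup>*\<close>, hence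
  \<open>ab = ab(ab)\<^sup>*\<close>, whose right-hand side is hermitian; then \<open>bab = b(ab)\<^sup>* = b\<close>, and
  \<open>ba\<^sup>2 = a\<close> because \<open>a \<in> bR\<close>. Conversely, with \<open>a = a\<^sup>2 r\<close> one gets \<open>ba = ar\<close> and
  \<open>aba = a\<close>; then \<open>b = a(rb)\<close> and \<open>a = b a\<^sup>2\<close> give \<open>bR = aR\<close>, while
  \<open>b = b(ab)\<^sup>* = b b\<^sup>* a\<^sup>*\<close> and \<open>a\<^sup>* = (aba)\<^sup>* = a\<^sup>* ab\<close> give \<open>Rb = Ra\<^sup>*\<close>.\<close>

lemma right_ideal_eq_iff:
  "right_ideal (x::'a::ring_1) = right_ideal y \<longleftrightarrow> (\<exists>r. x = y * r) \<and> (\<exists>t. y = x * t)"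
proof
  assume "right_ideal x = right_ideal y"
  moreover have "x \<in> right_ideal x" "y \<in> right_ideal y"
    unfolding right_ideal_def by (auto intro: exI[of _ 1])
  ultimately show "(\<exists>r. x = y * r) \<and> (\<exists>t. y = x * t)"
    unfolding right_ideal_def by auto
next
  assume "(\<exists>r. x = y * r) \<and> (\<exists>t. y = x * t)"
  then obtain r t where "x = y * r" "y = x * t" by blast
  then show "right_ideal x = right_ideal y"
    unfolding right_ideal_def by (auto simp: mult.assoc) (metis mult.assoc)+
qed

lemma left_ideal_eq_iff:
  "left_ideal (x::'a::ring_1) = left_ideal y \<longleftrightarrow> (\<exists>r. x = r * y) \<and> (\<exists>t. y = t * x)"
proof
  assume "left_ideal x = left_ideal y"
  moreover have "x \<in> left_ideal x" "y \<in> left_ideal y"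
    unfolding left_ideal_def by (auto intro: exI[of _ 1])
  ultimately show "(\<exists>r. x = r * y) \<and> (\<exists>t. y = t * x)"
    unfolding left_ideal_def by auto
next
  assume "(\<exists>r. x = r * y) \<and> (\<exists>t. y = t * x)"
  then obtain r t where "x = r * y" "y = t * x" by blast
  then show "left_ideal x = left_ideal y"
    unfolding left_ideal_def by (auto simp: mult.assoc[symmetric]) (metis mult.assoc)+
qed

lemma involution_involutive: "involution s \<Longrightarrow> s (s x) = x"
  unfolding involution_def by blast

lemma involution_mult: "involution s \<Longrightarrow> s (x * y) = s y * s x"
  unfolding involution_def by blast

lemma core_inverse_equations:
  fixes s :: "'a::ring_1 \<Rightarrow> 'a"
  assumes inv: "involution s" and core: "is_core_inverse s a b"
  shows "b * a * b = b" "s (a * b) = a * b" "b * a ^ 2 = a"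
proof -
  from core have aba: "a * b * a = a" and "right_ideal b = right_ideal a"
    and "left_ideal b = left_ideal (s a)"
    unfolding is_core_inverse_def by auto
  then obtain u t where u: "b = u * s a" and t: "a = b * t"
    unfolding right_ideal_eq_iff left_ideal_eq_iff by blast
  have sa: "s a = s a * s b * s a"
    using aba by (metis inv involution_mult mult.assoc)
  have b_absorbs: "b = b * s (a * b)"
    by (metis sa u inv involution_mult mult.assoc)
  then have "a * b = a * b * s (a * b)"
    by (simp add: mult.assoc)
  then show herm: "s (a * b) = a * b"
    by (metis inv involution_involutive involution_mult)
  show bab: "b * a * b = b"
    using b_absorbs herm by (simp add: mult.assoc)
  show "b * a ^ 2 = a"
    by (metis bab t power2_eq_square mult.assoc)
qed

lemma core_inverse_of_equations:
  fixes s :: "'a::ring_1 \<Rightarrow> 'a"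
  assumes inv: "involution s" and r: "a = a ^ 2 * r"
    and bab: "b * a * b = b" and herm: "s (a * b) = a * b" and ba2: "b * a ^ 2 = a"
  shows "is_core_inverse s a b"
proof -
  have baa: "b * a * a = a" and aar: "a = a * a * r"
    using ba2 r by (simp_all add: power2_eq_square mult.assoc)
  have ba: "b * a = a * r"
  proof -
    have "b * a = b * (a * a * r)" using aar by simp
    also have "\<dots> = a * r" using baa by (simp add: mult.assoc[symmetric])
    finally show ?thesis .
  qed
  have aba: "a * b * a = a"
    using ba aar by (simp add: mult.assoc)
  have "b = a * (r * b)"
    using ba bab by (simp add: mult.assoc)
  moreover have "a = b * (a * a)"
    using baa by (simp add: mult.assoc)
  ultimately have "right_ideal b = right_ideal a"
    unfolding right_ideal_eq_iff by blast
  moreover have "b = b * s b * s a"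
    using bab herm inv involution_mult by (metis mult.assoc)
  moreover have "s a = s a * a * b"
    using aba herm inv involution_mult by (metis mult.assoc)
  ultimately show ?thesis
    unfolding is_core_inverse_def left_ideal_eq_iff using aba by blast
qed

theorem theorem3p5:
  fixes s :: "'a::ring_1 \<Rightarrow> 'a" and a b :: 'a
  assumes "involution s"
    and "right_ideal a = right_ideal (a ^ 2)"
  shows "is_core_inverse s a b \<longleftrightarrow>
           (b * a * b = b \<and> s (a * b) = a * b \<and> b * a ^ 2 = a)"
proof
  show "b * a * b = b \<and> s (a * b) = a * b \<and> b * a ^ 2 = a" if "is_core_inverse s a b"
    using core_inverse_equations[OF assms(1) that] by blast
next
  assume "b * a * b = b \<and> s (a * b) = a * b \<and> b * a ^ 2 = a"
  moreover obtain r where "a = a ^ 2 * r"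
    using assms(2) unfolding right_ideal_eq_iff by blast
  ultimately show "is_core_inverse s a b"
    using core_inverse_of_equations[OF assms(1)] by blast
qed

end
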